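(* Let $k \in \mathbb{N}$ with $k > 3$. Then for any $q \in \mathbb{N}$ such that $q = 1$ or $q < \frac{k}{4}$, there exist $a_1, \dots, a_q \in \mathbb{N}$ such that for every $N \in \mathbb{N}$ there exists an $(a_1, \dots, a_k)$-flip graph for some $a_{q+1}, \dots, a_k \in \mathbb{N}$ with $a_k > N$.
   Context: For a graph $G$ with an edge-colouring $f\colon E(G)\to\{1,\dots,k\}$ and $1\le j\le k$: $e_j[v]$ is the number of edges coloured $j$ in the subgraph induced by the closed neighbourhood $N[v]$ of $v$, and $\deg_j(v)$ is the number of edges coloured $j$ incident to $v$. Given a strictly increasing sequence of positive integers $(a_1,\dots,a_k)$, a $d$-regular graph $G$ with $d=\sum_j a_j$ is an $(a_1,\dots,a_k)$-flip graph if there is an edge-colouring with colours $\{1,\dots,k\}$ such that $\deg_j(v)=a_j$ for all vertices $v$ and all $j$, and $e_k[v]<e_{k-1}[v]<\dots<e_1[v]$ for every vertex $v$. *)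

theory Defs
  imports Main
begin

definition simple_graph :: "'v set \<Rightarrow> 'v set set \<Rightarrow> bool" where
  "simple_graph V E \<longleftrightarrow> finite V \<and>
     (\<forall>e\<in>E. \<exists>u v. e = {u, v} \<and> u \<noteq> v \<and> u \<in> V \<and> v \<in> V)"

definition closed_nbhd :: "'v set set \<Rightarrow> 'v \<Rightarrow> 'v set" where
  "closed_nbhd E v = insert v {u. {u, v} \<in> E}"

definition degree :: "'v set set \<Rightarrow> 'v \<Rightarrow> nat" where
  "degree E v = card {e\<in>E. v \<in> e}"

definition col_degree :: "'v set set \<Rightarrow> ('v set \<Rightarrow> nat) \<Rightarrow> nat \<Rightarrow> 'v \<Rightarrow> nat" where
  "col_degree E f j v = card {e\<in>E. v \<in> e \<and> f e = j}"

definition col_edges_nbhd :: "'v set set \<Rightarrow> ('v set \<Rightarrow> nat) \<Rightarrow> nat \<Rightarrow> 'v \<Rightarrow> nat" where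
  "col_edges_nbhd E f j v = card {e\<in>E. e \<subseteq> closed_nbhd E v \<and> f e = j}"

text \<open>(a_1,...,a_k)-flip graph; the sequence is a :: nat => nat read on indices 1..k.\<close>
definition flip_graph :: "nat \<Rightarrow> (nat \<Rightarrow> nat) \<Rightarrow> 'v set \<Rightarrow> 'v set set \<Rightarrow> bool" where
  "flip_graph k a V E \<longleftrightarrow>
     k \<ge> 1 \<and> 0 < a 1 \<and> (\<forall>j\<in>{1..<k}. a j < a (Suc j)) \<and>
     simple_graph V E \<and> V \<noteq> {} \<and>
     (\<forall>v\<in>V. degree E v = (\<Sum>j=1..k. a j)) \<and>
     (\<exists>f. (\<forall>e\<in>E. f e \<in> {1..k}) \<and>
          (\<forall>v\<in>V. (\<forall>j\<in>{1..k}. col_degree E f j v = a j) \<and>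
                  (\<forall>j\<in>{1..<k}. col_edges_nbhd E f (Suc j) v < col_edges_nbhd E f j v)))"

end

theory Submission
  imports Defs "HOL-Library.Countable" "HOL-Number_Theory.Cong"
begin

text \<open>Cut \<open>{0..<m}\<close> into consecutive blocks of lengths \<open>c 1, \<dots>, c k\<close> and colour the edge \<open>xy\<close>
  of \<open>K\<^sub>m\<^sub>,\<^sub>m\<close> by the block containing \<open>(x + y) mod m\<close>: then colour \<open>j\<close> is \<open>c j\<close>-regular.
  Gluing three such complete bipartite pieces (with block lengths \<open>c1, c2, c3\<close> and sizes
  \<open>m1, m2, m3\<close>) gives a graph with \<open>deg\<^sub>j = c1 j + 2 m1 c2 j + c3 j\<close> and
  \<open>e\<^sub>j[v] = deg\<^sub>j + m1 m2 c1 j + 2 m1\<^sup>2 c2 j\<close> at every vertex.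
  Let \<open>c1\<close> decrease by one on the colours \<open>1..Q\<close> and vanish beyond, and let \<open>c2\<close> vanish on
  \<open>1..Q\<close> and decrease by one, starting near \<open>s\<close>, on \<open>Q+1..k\<close>. Then \<open>e\<^sub>j\<close> decreases: on \<open>1..Q\<close>
  through the term \<open>m1 m2 c1 j\<close>, beyond \<open>Q\<close> through \<open>2 m1\<^sup>2 c2 j\<close>, and at \<open>Q\<close> itself because
  \<open>m2 \<ge> (k - Q) s \<ge> 3Q s\<close> while \<open>m1 \<le> 3Q\<^sup>2\<close>. The padding \<open>c3\<close> makes the degrees increase,
  with \<open>deg\<^sub>j = 3Q + 1 + j\<close> for \<open>j \<le> Q\<close> independently of \<open>s\<close>, while \<open>deg\<^sub>k > s\<close>.\<close>

section \<open>Graphs given by a symmetric adjacency relation\<close>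

definition edges_of :: "('a \<Rightarrow> 'a \<Rightarrow> bool) \<Rightarrow> 'a set set" where
  "edges_of adj = {{u, w} | u w. adj u w}"

definition edge_colour :: "('a \<Rightarrow> 'a \<Rightarrow> nat) \<Rightarrow> 'a set \<Rightarrow> nat" where
  "edge_colour col e = (SOME j. \<exists>u w. e = {u, w} \<and> col u w = j)"

definition nbhd_arcs :: "('a \<Rightarrow> 'a \<Rightarrow> bool) \<Rightarrow> ('a \<Rightarrow> 'a \<Rightarrow> nat) \<Rightarrow> 'a \<Rightarrow> nat \<Rightarrow> ('a \<times> 'a) set" where
  "nbhd_arcs adj col v j =
     {(u, w). u \<in> insert v {w. adj v w} \<and> w \<in> insert v {w. adj v w} \<and> adj u w \<and> col u w = j}"

lemma inj_on_doubleton: "inj_on (\<lambda>w. {v, w}) A"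
  by (auto simp: inj_on_def doubleton_eq_iff)

locale coloured_adjacency =
  fixes V :: "'a set" and adj :: "'a \<Rightarrow> 'a \<Rightarrow> bool" and col :: "'a \<Rightarrow> 'a \<Rightarrow> nat"
  assumes finite_V: "finite V"
    and adj_in_V: "adj u w \<Longrightarrow> u \<in> V"
    and adj_irrefl: "\<not> adj u u"
    and adj_sym: "adj u w \<Longrightarrow> adj w u"
    and col_sym: "col u w = col w u"
begin

lemma edge_colour_doubleton [simp]: "edge_colour col {u, w} = col u w"
proof -
  have "\<exists>u' w'. {u, w} = {u', w'} \<and> col u' w' = edge_colour col {u, w}"
    unfolding edge_colour_def by (rule someI_ex) blast
  then show ?thesis
    using col_sym by (metis doubleton_eq_iff)
qed

lemma doubleton_in_edges_of_iff [simp]: "{u, w} \<in> edges_of adj \<longleftrightarrow> adj u w"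
  unfolding edges_of_def by (auto simp: doubleton_eq_iff intro: adj_sym)

lemma closed_nbhd_edges_of: "closed_nbhd (edges_of adj) v = insert v {w. adj v w}"
  unfolding closed_nbhd_def by (auto intro: adj_sym)

lemma finite_neighbours: "finite {w. adj v w}"
  using finite_V by (rule finite_subset[rotated]) (auto intro: adj_in_V adj_sym)

lemma incident_edges_of:
  "{e \<in> edges_of adj. v \<in> e \<and> P e} = (\<lambda>w. {v, w}) ` {w. adj v w \<and> P {v, w}}"
  unfolding edges_of_def by (auto simp: insert_commute intro: adj_sym)

lemma degree_edges_of: "degree (edges_of adj) v = card {w. adj v w}"
  using incident_edges_of[of v "\<lambda>_. True"]
  by (simp add: degree_def card_image inj_on_doubleton)

lemma col_degree_edges_of:
  "col_degree (edges_of adj) (edge_colour col) j v = card {w. adj v w \<and> col v w = j}"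
  using incident_edges_of[of v "\<lambda>e. edge_colour col e = j"]
  by (simp add: col_degree_def card_image inj_on_doubleton)

lemma col_edges_nbhd_edges_of:
  "2 * col_edges_nbhd (edges_of adj) (edge_colour col) j v = card (nbhd_arcs adj col v j)"
proof -
  let ?A = "nbhd_arcs adj col v j"
  let ?edge = "\<lambda>(u, w). {u, w}"
  have "finite ?A"
    by (rule finite_subset[of _ "insert v V \<times> insert v V"])
      (auto simp: nbhd_arcs_def finite_V intro: adj_in_V adj_sym)
  have edges: "?edge ` ?A = {e \<in> edges_of adj. e \<subseteq> closed_nbhd (edges_of adj) v \<and> edge_colour col e = j}"
    unfolding closed_nbhd_edges_of nbhd_arcs_def using adj_irrefl by (auto simp: edges_of_def image_iff)
  have fibre: "card {a \<in> ?A. ?edge a = e} = 2" if e: "e \<in> ?edge ` ?A" for e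
  proof -
    obtain u w where uw: "e = {u, w}" "(u, w) \<in> ?A"
      using e by force
    then have "u \<noteq> w" "(w, u) \<in> ?A"
      using adj_irrefl col_sym by (auto simp: nbhd_arcs_def intro: adj_sym)
    have "?edge a = e \<longleftrightarrow> a = (u, w) \<or> a = (w, u)" for a
      by (cases a) (auto simp: uw(1) doubleton_eq_iff)
    then have "{a \<in> ?A. ?edge a = e} = {(u, w), (w, u)}"
      using uw(2) \<open>(w, u) \<in> ?A\<close> by auto
    then show ?thesis
      using \<open>u \<noteq> w\<close> by simp
  qed
  have "card ?A = (\<Sum>e\<in>?edge ` ?A. card {a \<in> ?A. ?edge a = e})"
    using sum.image_gen[OF \<open>finite ?A\<close>, of "\<lambda>_. 1::nat" ?edge] by simp
  also have "\<dots> = 2 * card (?edge ` ?A)"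
    using fibre by simp
  finally show ?thesis
    unfolding col_edges_nbhd_def edges by simp
qed

lemma card_nbhd_arcs:
  "card (nbhd_arcs adj col v j) =
     2 * card {w. adj v w \<and> col v w = j} + card {(u, w). adj v u \<and> adj v w \<and> adj u w \<and> col u w = j}"
proof -
  let ?D = "{w. adj v w \<and> col v w = j}"
  let ?I = "{(u, w). adj v u \<and> adj v w \<and> adj u w \<and> col u w = j}"
  have "nbhd_arcs adj col v j = Pair v ` ?D \<union> ((\<lambda>u. (u, v)) ` ?D \<union> ?I)"
    unfolding nbhd_arcs_def using adj_irrefl col_sym by (auto intro: adj_sym)
  moreover have "finite ?D" "finite ?I"
    using finite_subset[OF _ finite_neighbours]
      finite_subset[of ?I "{w. adj v w} \<times> {w. adj v w}"] finite_neighbours by auto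
  moreover have "Pair v ` ?D \<inter> ((\<lambda>u. (u, v)) ` ?D \<union> ?I) = {}" "(\<lambda>u. (u, v)) ` ?D \<inter> ?I = {}"
    using adj_irrefl by auto
  moreover have "card (Pair v ` ?D) = card ?D" "card ((\<lambda>u. (u, v)) ` ?D) = card ?D"
    by (simp_all add: card_image inj_on_def)
  ultimately show ?thesis
    by (simp add: card_Un_disjoint)
qed

lemma card_neighbours_sum_colours:
  assumes "\<And>w. adj v w \<Longrightarrow> col v w \<in> {1..k}"
  shows "card {w. adj v w} = (\<Sum>j=1..k. card {w. adj v w \<and> col v w = j})"
proof -
  have "{w. adj v w} = (\<Union>j\<in>{1..k}. {w. adj v w \<and> col v w = j})"
    using assms by auto
  also have "card \<dots> = (\<Sum>j=1..k. card {w. adj v w \<and> col v w = j})"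
    by (rule card_UN_disjoint) (auto intro: finite_subset[OF _ finite_neighbours])
  finally show ?thesis .
qed

lemma flip_graph_edges_of:
  assumes "1 \<le> k" "0 < b 1" "\<forall>j\<in>{1..<k}. b j < b (Suc j)" "V \<noteq> {}"
    and col_range: "\<And>u w. adj u w \<Longrightarrow> col u w \<in> {1..k}"
    and col_degree: "\<And>v j. v \<in> V \<Longrightarrow> j \<in> {1..k} \<Longrightarrow> card {w. adj v w \<and> col v w = j} = b j"
    and arcs_decreasing: "\<And>v j. v \<in> V \<Longrightarrow> j \<in> {1..<k} \<Longrightarrow>
           card (nbhd_arcs adj col v (Suc j)) < card (nbhd_arcs adj col v j)"
  shows "flip_graph k b V (edges_of adj)"
  unfolding flip_graph_def
proof (intro conjI exI[of _ "edge_colour col"] ballI)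
  show "simple_graph V (edges_of adj)"
    unfolding simple_graph_def edges_of_def
    using finite_V adj_irrefl by (blast intro: adj_in_V adj_sym)
  show "degree (edges_of adj) v = (\<Sum>j=1..k. b j)" if "v \<in> V" for v
  proof -
    have "degree (edges_of adj) v = (\<Sum>j=1..k. card {w. adj v w \<and> col v w = j})"
      unfolding degree_edges_of by (rule card_neighbours_sum_colours) (rule col_range)
    also have "\<dots> = (\<Sum>j=1..k. b j)"
      using that col_degree by (intro sum.cong) auto
    finally show ?thesis .
  qed
  show "edge_colour col e \<in> {1..k}" if "e \<in> edges_of adj" for e
    using that col_range by (auto simp: edges_of_def)
  show "col_degree (edges_of adj) (edge_colour col) j v = b j" if "v \<in> V" "j \<in> {1..k}" for v j
    using that col_degree by (simp add: col_degree_edges_of)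
  show "col_edges_nbhd (edges_of adj) (edge_colour col) (Suc j) v
          < col_edges_nbhd (edges_of adj) (edge_colour col) j v" if "v \<in> V" "j \<in> {1..<k}" for v j
    using arcs_decreasing[OF that] col_edges_nbhd_edges_of[of "Suc j" v] col_edges_nbhd_edges_of[of j v]
    by linarith
qed (use assms in auto)

end

lemma closed_nbhd_image:
  assumes "inj g"
  shows "closed_nbhd ((`) g ` E) (g v) = g ` closed_nbhd E v"
proof -
  have "{x, g v} \<in> (`) g ` E \<longleftrightarrow> (\<exists>u. x = g u \<and> {u, v} \<in> E)" for x
  proof
    assume "{x, g v} \<in> (`) g ` E"
    then obtain e where "e \<in> E" "{x, g v} = g ` e"
      by blast
    moreover from this obtain u where "x = g u"
      by blast
    ultimately have "g ` {u, v} = g ` e" "e \<in> E"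
      by simp_all
    then show "\<exists>u. x = g u \<and> {u, v} \<in> E"
      using \<open>x = g u\<close> inj_image_eq_iff[OF assms] by metis
  next
    assume "\<exists>u. x = g u \<and> {u, v} \<in> E"
    then obtain u where "{x, g v} = g ` {u, v}" "{u, v} \<in> E"
      by auto
    then show "{x, g v} \<in> (`) g ` E"
      by (simp only: image_eqI)
  qed
  then have "{x. {x, g v} \<in> (`) g ` E} = g ` {u. {u, v} \<in> E}"
    by blast
  then show ?thesis
    unfolding closed_nbhd_def by simp
qed

lemma card_image_edges:
  assumes "inj g"
  shows "card {e' \<in> (`) g ` E. P (g -` e')} = card {e \<in> E. P e}"
proof -
  have "{e' \<in> (`) g ` E. P (g -` e')} = (`) g ` {e \<in> E. P e}"
    using inj_vimage_image_eq[OF assms] by auto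
  moreover have "inj ((`) g)"
    using assms by (meson injI inj_image_eq_iff)
  ultimately show ?thesis
    by (simp add: card_image inj_on_subset)
qed

lemma simple_graph_image:
  assumes "inj g" and simple: "simple_graph V E"
  shows "simple_graph (g ` V) ((`) g ` E)"
  unfolding simple_graph_def
proof (intro conjI ballI)
  show "finite (g ` V)"
    using simple by (simp add: simple_graph_def)
  fix e' assume "e' \<in> (`) g ` E"
  then obtain e where "e \<in> E" "e' = g ` e"
    by blast
  moreover obtain u w where "e = {u, w}" "u \<noteq> w" "u \<in> V" "w \<in> V"
    using simple \<open>e \<in> E\<close> unfolding simple_graph_def by blast
  ultimately show "\<exists>u w. e' = {u, w} \<and> u \<noteq> w \<and> u \<in> g ` V \<and> w \<in> g ` V"
    using inj_eq[OF assms(1)] by (intro exI[of _ "g u"] exI[of _ "g w"]) auto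
qed

lemma degree_image:
  assumes "inj g"
  shows "degree ((`) g ` E) (g v) = degree E v"
proof -
  have mem: "g v \<in> e' \<longleftrightarrow> v \<in> g -` e'" for e'
    by simp
  show ?thesis
    unfolding degree_def mem by (rule card_image_edges[OF assms])
qed

lemma col_degree_image:
  assumes "inj g"
  shows "col_degree ((`) g ` E) (\<lambda>e'. f (g -` e')) j (g v) = col_degree E f j v"
proof -
  have mem: "g v \<in> e' \<longleftrightarrow> v \<in> g -` e'" for e'
    by simp
  show ?thesis
    unfolding col_degree_def mem by (rule card_image_edges[OF assms])
qed

lemma col_edges_nbhd_image:
  assumes "inj g"
  shows "col_edges_nbhd ((`) g ` E) (\<lambda>e'. f (g -` e')) j (g v) = col_edges_nbhd E f j v"
proof -
  have "e' \<subseteq> g ` N \<longleftrightarrow> g -` e' \<subseteq> N" if "e' \<in> (`) g ` E" for e' N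
    using that inj_vimage_image_eq[OF assms] by (auto simp: inj_image_subset_iff[OF assms, symmetric])
  then have "{e' \<in> (`) g ` E. e' \<subseteq> closed_nbhd ((`) g ` E) (g v) \<and> f (g -` e') = j}
      = {e' \<in> (`) g ` E. g -` e' \<subseteq> closed_nbhd E v \<and> f (g -` e') = j}"
    unfolding closed_nbhd_image[OF assms] by (simp cong: conj_cong)
  then show ?thesis
    unfolding col_edges_nbhd_def
    using card_image_edges[OF assms, of E "\<lambda>e. e \<subseteq> closed_nbhd E v \<and> f e = j"] by simp
qed

lemma flip_graph_image:
  assumes "inj g" and flip: "flip_graph k b V E"
  shows "flip_graph k b (g ` V) ((`) g ` E)"
proof -
  obtain f where f_range: "\<forall>e\<in>E. f e \<in> {1..k}"
    and f_flip: "\<forall>v\<in>V. (\<forall>j\<in>{1..k}. col_degree E f j v = b j) \<and>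
                  (\<forall>j\<in>{1..<k}. col_edges_nbhd E f (Suc j) v < col_edges_nbhd E f j v)"
    using flip unfolding flip_graph_def by blast
  have "simple_graph (g ` V) ((`) g ` E)"
    using assms by (simp add: flip_graph_def simple_graph_image)
  moreover have "\<forall>e'\<in>(`) g ` E. f (g -` e') \<in> {1..k}"
    using f_range by (simp add: inj_vimage_image_eq[OF assms(1)])
  ultimately show ?thesis
    using flip f_flip unfolding flip_graph_def
    by (intro conjI exI[of _ "\<lambda>e'. f (g -` e')"])
      (simp_all add: degree_image col_degree_image col_edges_nbhd_image assms(1))
qed

section \<open>Cyclic block colourings\<close>

definition partial_sum :: "(nat \<Rightarrow> nat) \<Rightarrow> nat \<Rightarrow> nat" where
  "partial_sum c j = (\<Sum>l=1..j. c l)"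

definition block_index :: "(nat \<Rightarrow> nat) \<Rightarrow> nat \<Rightarrow> nat" where
  "block_index c d = (LEAST j. d < partial_sum c j)"

lemma partial_sum_0 [simp]: "partial_sum c 0 = 0"
  by (simp add: partial_sum_def)

lemma partial_sum_Suc: "partial_sum c (Suc j) = partial_sum c j + c (Suc j)"
  by (simp add: partial_sum_def)

lemma partial_sum_mono: "i \<le> j \<Longrightarrow> partial_sum c i \<le> partial_sum c j"
  unfolding partial_sum_def by (rule sum_mono2) auto

lemma member_le_partial_sum: "1 \<le> i \<Longrightarrow> i \<le> k \<Longrightarrow> c i \<le> partial_sum c k"
  unfolding partial_sum_def by (rule member_le_sum) auto

lemma partial_sum_eq_sum_support:
  assumes "1 \<le> lo" "hi \<le> k" "\<And>l. l < lo \<or> hi < l \<Longrightarrow> c l = 0"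
  shows "partial_sum c k = (\<Sum>l=lo..hi. c l)"
  unfolding partial_sum_def by (rule sum.mono_neutral_right) (use assms in auto)

lemma block_index_eq_iff:
  assumes "1 \<le> j" and "d < partial_sum c K"
  shows "block_index c d = j \<longleftrightarrow> partial_sum c (j - 1) \<le> d \<and> d < partial_sum c j"
proof
  assume j: "block_index c d = j"
  have "d < partial_sum c j"
    using LeastI[of "\<lambda>j. d < partial_sum c j", OF assms(2)] j by (simp add: block_index_def)
  moreover have "\<not> d < partial_sum c (j - 1)"
    using not_less_Least[of "j - 1" "\<lambda>j. d < partial_sum c j"] j assms(1)
    by (simp add: block_index_def)
  ultimately show "partial_sum c (j - 1) \<le> d \<and> d < partial_sum c j"
    by simp
next
  assume d: "partial_sum c (j - 1) \<le> d \<and> d < partial_sum c j"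
  have "j \<le> i" if "d < partial_sum c i" for i
  proof (rule ccontr)
    assume "\<not> j \<le> i"
    then have "partial_sum c i \<le> partial_sum c (j - 1)"
      by (intro partial_sum_mono) simp
    with d that show False
      by simp
  qed
  then show "block_index c d = j"
    unfolding block_index_def using d by (intro Least_equality) auto
qed

lemma block_index_in_range:
  assumes "d < partial_sum c k"
  shows "block_index c d \<in> {1..k}"
proof -
  have "block_index c d \<le> k"
    unfolding block_index_def using assms by (rule Least_le)
  moreover have "d < partial_sum c (block_index c d)"
    unfolding block_index_def using assms by (rule LeastI)
  then have "block_index c d \<noteq> 0"
    by (metis partial_sum_0 not_less0)
  ultimately show ?thesis
    by simp
qed

lemma card_block_index:
  assumes "1 \<le> j" "j \<le> k"
  shows "card {d. d < partial_sum c k \<and> block_index c d = j} = c j"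
proof -
  have "partial_sum c j \<le> partial_sum c k"
    using assms(2) by (rule partial_sum_mono)
  then have "{d. d < partial_sum c k \<and> block_index c d = j} = {partial_sum c (j - 1)..<partial_sum c j}"
    using block_index_eq_iff[OF assms(1), of _ c k] by (intro set_eqI iffI) auto
  moreover have "partial_sum c j = partial_sum c (j - 1) + c j"
    using partial_sum_Suc[of c "j - 1"] assms(1) by simp
  ultimately show ?thesis
    by simp
qed

lemma bij_betw_add_mod:
  fixes m x :: nat
  assumes "0 < m"
  shows "bij_betw (\<lambda>y. (x + y) mod m) {..<m} {..<m}"
proof -
  have "inj_on (\<lambda>y. (x + y) mod m) {..<m}"
    by (rule inj_onI) (use cong_add_lcancel_nat[of x _ _ m] in \<open>auto simp: cong_def\<close>)
  moreover have "(\<lambda>y. (x + y) mod m) ` {..<m} \<subseteq> {..<m}"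
    using assms by auto
  ultimately show ?thesis
    by (simp add: bij_betw_def endo_inj_surj)
qed

lemma card_add_mod:
  fixes m x :: nat
  shows "card {y. y < m \<and> P ((x + y) mod m)} = card {d. d < m \<and> P d}"
proof (cases "m = 0")
  case False
  have "bij_betw (\<lambda>y. (x + y) mod m) {y \<in> {..<m}. P ((x + y) mod m)} {d \<in> {..<m}. P d}"
    using bij_betw_add_mod[of m x] False by (intro bij_betw_Collect) auto
  then show ?thesis
    by (simp add: bij_betw_same_card lessThan_def)
qed simp

lemma card_block_index_add_mod:
  assumes "1 \<le> j" "j \<le> k"
  shows "card {y. y < partial_sum c k \<and> block_index c ((x + y) mod partial_sum c k) = j} = c j"
  using card_add_mod[where P = "\<lambda>d. block_index c d = j" and m = "partial_sum c k"] card_block_index[OF assms]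
  by simp

datatype vertex = Vertex bool nat bool nat bool nat

instance vertex :: countable
  by countable_datatype

locale flip_construction =
  fixes c1 c2 c3 :: "nat \<Rightarrow> nat" and k :: nat
begin

definition m1 :: nat where "m1 = partial_sum c1 k"
definition m2 :: nat where "m2 = partial_sum c2 k"
definition m3 :: nat where "m3 = partial_sum c3 k"

definition deg :: "nat \<Rightarrow> nat" where
  "deg j = c1 j + 2 * m1 * c2 j + c3 j"

definition nbhd_edges :: "nat \<Rightarrow> nat" where
  "nbhd_edges j = deg j + m1 * m2 * c1 j + 2 * m1 * m1 * c2 j"

fun in_range :: "vertex \<Rightarrow> bool" where
  "in_range (Vertex s1 x s2 a s3 w) \<longleftrightarrow> x < m1 \<and> a < m2 \<and> w < m3"

definition vertices :: "vertex set" where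
  "vertices = {v. in_range v}"

text \<open>Edges of the first kind form a copy of \<open>K\<^sub>m\<^sub>1\<^sub>,\<^sub>m\<^sub>1\<close> on \<open>(s1, x)\<close> in every fibre of
  \<open>(s2, a, s3, w)\<close>; edges of the second kind join any two vertices with opposite \<open>s2\<close> in the
  same \<open>(s3, w)\<close>-layer; edges of the third kind form a copy of \<open>K\<^sub>m\<^sub>3\<^sub>,\<^sub>m\<^sub>3\<close> on \<open>(s3, w)\<close>
  in every fibre of \<open>(s1, x, s2, a)\<close>.\<close>
fun linked :: "vertex \<Rightarrow> vertex \<Rightarrow> bool" where
  "linked (Vertex s1 x s2 a s3 w) (Vertex t1 y t2 b t3 z) \<longleftrightarrow>
     (s1 \<noteq> t1 \<and> s2 = t2 \<and> a = b \<and> s3 = t3 \<and> w = z) \<or>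
     (s2 \<noteq> t2 \<and> s3 = t3 \<and> w = z) \<or>
     (s1 = t1 \<and> x = y \<and> s2 = t2 \<and> a = b \<and> s3 \<noteq> t3)"

definition adj :: "vertex \<Rightarrow> vertex \<Rightarrow> bool" where
  "adj u w \<longleftrightarrow> in_range u \<and> in_range w \<and> linked u w"

fun colour :: "vertex \<Rightarrow> vertex \<Rightarrow> nat" where
  "colour (Vertex s1 x s2 a s3 w) (Vertex t1 y t2 b t3 z) =
     (if s2 \<noteq> t2 then block_index c2 ((a + b) mod m2)
      else if s3 \<noteq> t3 then block_index c3 ((w + z) mod m3)
      else block_index c1 ((x + y) mod m1))"

lemma vertices_eq:
  "vertices = (\<lambda>(s1, x, s2, a, s3, w). Vertex s1 x s2 a s3 w) `
     (UNIV \<times> {..<m1} \<times> UNIV \<times> {..<m2} \<times> UNIV \<times> {..<m3})"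
proof (rule set_eqI)
  fix v
  show "v \<in> vertices \<longleftrightarrow> v \<in> (\<lambda>(s1, x, s2, a, s3, w). Vertex s1 x s2 a s3 w) `
          (UNIV \<times> {..<m1} \<times> UNIV \<times> {..<m2} \<times> UNIV \<times> {..<m3})"
    by (cases v) (auto simp: vertices_def image_iff)
qed

sublocale coloured_adjacency vertices adj colour
proof
  show "finite vertices"
    unfolding vertices_eq by simp
  show "adj u w \<Longrightarrow> u \<in> vertices" for u w
    by (simp add: adj_def vertices_def)
  show "\<not> adj u u" for u
    by (cases u) (simp add: adj_def)
  show "adj u w \<Longrightarrow> adj w u" for u w
    by (cases u; cases w) (auto simp: adj_def)
  show "colour u w = colour w u" for u w
    by (cases u; cases w) (simp add: add.commute)
qed

lemma colour_in_range:
  assumes "adj u w"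
  shows "colour u w \<in> {1..k}"
proof -
  obtain s1 x s2 a s3 w0 t1 y t2 b t3 z
    where uw: "u = Vertex s1 x s2 a s3 w0" "w = Vertex t1 y t2 b t3 z"
    by (meson vertex.exhaust)
  then have "(x + y) mod m1 < partial_sum c1 k" "(a + b) mod m2 < partial_sum c2 k"
    "(w0 + z) mod m3 < partial_sum c3 k"
    using assms by (auto simp: adj_def m1_def m2_def m3_def)
  then have "block_index c1 ((x + y) mod m1) \<in> {1..k}" "block_index c2 ((a + b) mod m2) \<in> {1..k}"
    "block_index c3 ((w0 + z) mod m3) \<in> {1..k}"
    by (simp_all only: block_index_in_range)
  then show ?thesis
    using uw by simp
qed

lemma card_coloured_neighbours:
  assumes "v \<in> vertices" and j: "1 \<le> j" "j \<le> k"
  shows "card {u. adj v u \<and> colour v u = j} = deg j"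
proof -
  obtain s1 x s2 a s3 w where v: "v = Vertex s1 x s2 a s3 w"
    by (cases v)
  have lt: "x < m1" "a < m2" "w < m3"
    using assms(1) v by (auto simp: vertices_def)
  define B1 where "B1 = {y. y < m1 \<and> block_index c1 ((x + y) mod m1) = j}"
  define B2 where "B2 = {b. b < m2 \<and> block_index c2 ((a + b) mod m2) = j}"
  define B3 where "B3 = {z. z < m3 \<and> block_index c3 ((w + z) mod m3) = j}"
  define S1 where "S1 = (\<lambda>y. Vertex (\<not> s1) y s2 a s3 w) ` B1"
  define S2 where "S2 = (\<lambda>(t, y, b). Vertex t y (\<not> s2) b s3 w) ` (UNIV \<times> {..<m1} \<times> B2)"
  define S3 where "S3 = (\<lambda>z. Vertex s1 x s2 a (\<not> s3) z) ` B3"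
  have "{u. adj v u \<and> colour v u = j} = S1 \<union> (S2 \<union> S3)"
  proof (rule set_eqI)
    fix u
    show "u \<in> {u. adj v u \<and> colour v u = j} \<longleftrightarrow> u \<in> S1 \<union> (S2 \<union> S3)"
      by (cases u) (auto simp: v adj_def S1_def S2_def S3_def B1_def B2_def B3_def lt image_iff)
  qed
  moreover have "card B1 = c1 j" "card B2 = c2 j" "card B3 = c3 j"
    unfolding B1_def B2_def B3_def m1_def m2_def m3_def
    using j by (simp_all add: card_block_index_add_mod)
  then have "card S1 = c1 j" "card S2 = 2 * m1 * c2 j" "card S3 = c3 j"
    unfolding S1_def S2_def S3_def
    by (subst card_image; force simp: inj_on_def card_cartesian_product)+
  moreover have "finite S1" "finite S2" "finite S3"
    unfolding S1_def S2_def S3_def B1_def B2_def B3_def by auto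
  moreover have "S1 \<inter> (S2 \<union> S3) = {}" "S2 \<inter> S3 = {}"
    unfolding S1_def S2_def S3_def by auto
  ultimately show ?thesis
    by (simp add: card_Un_disjoint deg_def)
qed

text \<open>Two neighbours of \<open>v\<close> are adjacent only if both are of the second kind and lie on
  opposite first sides, or one is of the first kind and the other of the second kind.\<close>
lemma card_arcs_between_neighbours:
  assumes "v \<in> vertices" and j: "1 \<le> j" "j \<le> k"
  shows "card {(u, u'). adj v u \<and> adj v u' \<and> adj u u' \<and> colour u u' = j}
           = 2 * m1 * m2 * c1 j + 4 * m1 * m1 * c2 j"
proof -
  obtain s1 x s2 a s3 w where v: "v = Vertex s1 x s2 a s3 w"
    by (cases v)
  have lt: "x < m1" "a < m2" "w < m3"
    using assms(1) v by (auto simp: vertices_def)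
  define B1 where "B1 y = {y'. y' < m1 \<and> block_index c1 ((y + y') mod m1) = j}" for y
  define B2 where "B2 = {b. b < m2 \<and> block_index c2 ((a + b) mod m2) = j}"
  define I22 where "I22 = (\<lambda>(t, y, b, y'). (Vertex t y (\<not> s2) b s3 w, Vertex (\<not> t) y' (\<not> s2) b s3 w))
    ` (UNIV \<times> (SIGMA y:{..<m1}. {..<m2} \<times> B1 y))"
  define I12 where "I12 = (\<lambda>(y, t, y', b). (Vertex (\<not> s1) y s2 a s3 w, Vertex t y' (\<not> s2) b s3 w))
    ` ({..<m1} \<times> UNIV \<times> {..<m1} \<times> B2)"
  define I21 where "I21 = (\<lambda>(y, t, y', b). (Vertex t y' (\<not> s2) b s3 w, Vertex (\<not> s1) y s2 a s3 w))
    ` ({..<m1} \<times> UNIV \<times> {..<m1} \<times> B2)"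
  have "{(u, u'). adj v u \<and> adj v u' \<and> adj u u' \<and> colour u u' = j} = I22 \<union> (I12 \<union> I21)"
  proof (rule set_eqI)
    fix p :: "vertex \<times> vertex"
    obtain t1 y1 t2 b1 t3 z1 r1 y2 r2 b2 r3 z2
      where p: "p = (Vertex t1 y1 t2 b1 t3 z1, Vertex r1 y2 r2 b2 r3 z2)"
      by (metis vertex.exhaust surj_pair)
    show "p \<in> {(u, u'). adj v u \<and> adj v u' \<and> adj u u' \<and> colour u u' = j} \<longleftrightarrow> p \<in> I22 \<union> (I12 \<union> I21)"
      unfolding p v I22_def I12_def I21_def B1_def B2_def
      using lt by (auto simp: adj_def image_iff add.commute)
  qed
  moreover have "card (B1 y) = c1 j" "finite (B1 y)" for y
    unfolding B1_def m1_def using j by (simp_all add: card_block_index_add_mod)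
  then have "card I22 = 2 * (m1 * (m2 * c1 j))"
    unfolding I22_def by (subst card_image) (auto simp: inj_on_def card_cartesian_product card_SigmaI)
  moreover have "card B2 = c2 j"
    unfolding B2_def m2_def using j by (simp add: card_block_index_add_mod)
  then have "card I12 = m1 * (2 * (m1 * c2 j))" "card I21 = m1 * (2 * (m1 * c2 j))"
    unfolding I12_def I21_def by (subst card_image; auto simp: inj_on_def card_cartesian_product)+
  moreover have "finite I22" "finite I12" "finite I21"
    unfolding I22_def I12_def I21_def B1_def B2_def by auto
  moreover have "I22 \<inter> (I12 \<union> I21) = {}" "I12 \<inter> I21 = {}"
    unfolding I22_def I12_def I21_def by auto
  ultimately show ?thesis
    by (simp add: card_Un_disjoint algebra_simps)
qed

lemma card_nbhd_arcs_eq: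
  assumes "v \<in> vertices" and "1 \<le> j" "j \<le> k"
  shows "card (nbhd_arcs adj colour v j) = 2 * nbhd_edges j"
  using assms by (simp add: card_nbhd_arcs card_coloured_neighbours card_arcs_between_neighbours
      nbhd_edges_def algebra_simps)

lemma exists_flip_graph:
  assumes "1 \<le> k" "0 < m1" "0 < m2" "0 < m3" "0 < deg 1"
    and "\<forall>j\<in>{1..<k}. deg j < deg (Suc j)"
    and nbhd_edges_decreasing: "\<And>j. j \<in> {1..<k} \<Longrightarrow> nbhd_edges (Suc j) < nbhd_edges j"
  shows "\<exists>(V :: nat set) E. flip_graph k deg V E"
proof -
  have "Vertex False 0 False 0 False 0 \<in> vertices"
    using assms(2-4) by (simp add: vertices_def)
  then have "flip_graph k deg vertices (edges_of adj)"
    using assms(1,5,6) colour_in_range card_coloured_neighbours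
    by (intro flip_graph_edges_of) (auto simp: card_nbhd_arcs_eq nbhd_edges_decreasing)
  then have "flip_graph k deg (to_nat ` vertices) ((`) to_nat ` edges_of adj)"
    by (intro flip_graph_image) simp
  then show ?thesis
    by blast
qed

end

section \<open>Choice of the block lengths\<close>

definition low_blocks :: "nat \<Rightarrow> nat \<Rightarrow> nat" where
  "low_blocks Q j = (if 1 \<le> j \<and> j \<le> Q then 3 * Q + 1 - j else 0)"

definition high_blocks :: "nat \<Rightarrow> nat \<Rightarrow> nat \<Rightarrow> nat \<Rightarrow> nat" where
  "high_blocks Q k s j = (if Q < j \<and> j \<le> k then s + k - j else 0)"

definition pad_blocks :: "nat \<Rightarrow> nat \<Rightarrow> nat \<Rightarrow> nat \<Rightarrow> nat" where
  "pad_blocks Q k h j = (if 1 \<le> j \<and> j \<le> Q then 2 * j else if Q < j \<and> j \<le> k then 4 * h * (j - Q) else 0)"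

locale flip_parameters =
  fixes Q k s :: nat
  assumes Q_pos: "1 \<le> Q"
    and k_ge: "4 * Q \<le> k"
    and s_ge: "2 * (partial_sum (low_blocks Q) k + 1) * k + 5 \<le> s"
begin

sublocale flip_construction "low_blocks Q" "high_blocks Q k s" "pad_blocks Q k (partial_sum (low_blocks Q) k)" k .

lemma Q_less_k: "Q < k"
  using Q_pos k_ge by simp

lemma m1_ge: "3 * Q \<le> m1"
  using member_le_partial_sum[of 1 k "low_blocks Q"] Q_pos Q_less_k
  by (simp add: m1_def low_blocks_def)

lemma m1_le: "m1 \<le> 3 * Q * Q"
proof -
  have "m1 = (\<Sum>l=1..Q. low_blocks Q l)"
    unfolding m1_def using Q_pos Q_less_k
    by (intro partial_sum_eq_sum_support) (auto simp: low_blocks_def)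
  also have "\<dots> \<le> (\<Sum>l=1..Q. 3 * Q)"
    by (intro sum_mono) (simp add: low_blocks_def, linarith)
  finally show ?thesis
    by simp
qed

lemma m2_ge: "(k - Q) * s \<le> m2"
proof -
  have "(k - Q) * s = (\<Sum>l=Suc Q..k. s)"
    by simp
  also have "\<dots> \<le> (\<Sum>l=Suc Q..k. high_blocks Q k s l)"
    by (intro sum_mono) (simp add: high_blocks_def, linarith)
  also have "\<dots> = m2"
    unfolding m2_def using Q_less_k
    by (intro partial_sum_eq_sum_support[symmetric]) (auto simp: high_blocks_def)
  finally show ?thesis .
qed

lemma m2_pos: "0 < m2"
proof -
  have "0 < (k - Q) * s"
    using Q_less_k s_ge by simp
  then show ?thesis
    using m2_ge by linarith
qed

lemma m3_pos: "0 < m3"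
  using member_le_partial_sum[of 1 k "pad_blocks Q k m1"] Q_pos Q_less_k
  by (simp add: m3_def m1_def pad_blocks_def)

lemma deg_low: "1 \<le> j \<Longrightarrow> j \<le> Q \<Longrightarrow> deg j = 3 * Q + 1 + j"
  by (simp add: deg_def low_blocks_def high_blocks_def pad_blocks_def)

lemma low_blocks_step: "1 \<le> j \<Longrightarrow> j < Q \<Longrightarrow> low_blocks Q j = Suc (low_blocks Q (Suc j))"
  by (simp add: low_blocks_def)

lemma high_blocks_step: "Q < j \<Longrightarrow> j < k \<Longrightarrow> high_blocks Q k s j = Suc (high_blocks Q k s (Suc j))"
  by (simp add: high_blocks_def)

lemma pad_blocks_step: "Q < j \<Longrightarrow> j < k \<Longrightarrow> pad_blocks Q k h (Suc j) = pad_blocks Q k h j + 4 * h"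
  by (simp add: pad_blocks_def Suc_diff_le algebra_simps)

lemma deg_last_gt: "s < deg k"
proof -
  have "deg k = 2 * m1 * s + pad_blocks Q k m1 k"
    using Q_less_k by (simp add: deg_def low_blocks_def high_blocks_def m1_def)
  moreover have "s \<le> 2 * m1 * s"
    using m1_ge Q_pos by simp
  moreover have "0 < pad_blocks Q k m1 k"
    using m1_ge Q_pos Q_less_k by (simp add: pad_blocks_def)
  ultimately show ?thesis
    by linarith
qed

lemma deg_increasing:
  assumes "1 \<le> j" "j < k"
  shows "deg j < deg (Suc j)"
proof -
  consider "j < Q" | "j = Q" | "Q < j"
    by linarith
  then show ?thesis
  proof cases
    case 1
    then show ?thesis
      using assms by (simp add: deg_low)
  next
    case 2
    then have "deg j = 4 * Q + 1" "4 * m1 \<le> deg (Suc j)"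
      using assms by (simp_all add: deg_def low_blocks_def high_blocks_def pad_blocks_def m1_def)
    then show ?thesis
      using m1_ge Q_pos by linarith
  next
    case 3
    then show ?thesis
      using assms m1_ge Q_pos
      by (simp add: deg_def low_blocks_def high_blocks_step pad_blocks_step m1_def algebra_simps)
  qed
qed

lemma nbhd_edges_low:
  assumes "1 \<le> j" "j < Q"
  shows "nbhd_edges (Suc j) < nbhd_edges j"
proof -
  have "3 * Q * 1 \<le> m1 * m2"
    using m1_ge m2_pos by (intro mult_le_mono) auto
  then show ?thesis
    using assms Q_pos
    by (simp add: nbhd_edges_def deg_low low_blocks_step high_blocks_def algebra_simps)
qed

lemma nbhd_edges_drop: "nbhd_edges (Suc Q) < nbhd_edges Q"
proof -
  define R where "R = high_blocks Q k s (Suc Q)"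
  have "nbhd_edges (Suc Q) = m1 * (2 * (m1 + 1) * R + 4)"
    using Q_less_k
    by (simp add: nbhd_edges_def deg_def low_blocks_def pad_blocks_def R_def m1_def algebra_simps)
  also have "\<dots> < m1 * (m2 * (2 * Q + 1))"
  proof -
    have "R \<le> s + k"
      by (simp add: R_def high_blocks_def)
    then have "2 * (m1 + 1) * R + 4 \<le> 2 * (m1 + 1) * (s + k) + 4"
      by (intro add_le_mono1 mult_le_mono2)
    also have "\<dots> < (2 * m1 + 3) * s"
      using s_ge by (simp add: m1_def algebra_simps)
    also have "\<dots> \<le> (k - Q) * (2 * Q + 1) * s"
    proof (intro mult_le_mono1)
      have "2 * m1 + 3 \<le> 3 * Q * (2 * Q + 1)"
        using m1_le Q_pos by (simp add: algebra_simps)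
      also have "\<dots> \<le> (k - Q) * (2 * Q + 1)"
        using k_ge by (intro mult_le_mono1) simp
      finally show "2 * m1 + 3 \<le> (k - Q) * (2 * Q + 1)" .
    qed
    also have "\<dots> = (k - Q) * s * (2 * Q + 1)"
      by (simp only: ac_simps)
    also have "\<dots> \<le> m2 * (2 * Q + 1)"
      using m2_ge by (rule mult_le_mono1)
    finally have "2 * (m1 + 1) * R + 4 < m2 * (2 * Q + 1)" .
    then show ?thesis
      using m1_ge Q_pos by simp
  qed
  also have "\<dots> \<le> nbhd_edges Q"
    using Q_pos by (simp add: nbhd_edges_def deg_low low_blocks_def high_blocks_def algebra_simps)
  finally show ?thesis .
qed

lemma nbhd_edges_high:
  assumes "Q < j" "j < k"
  shows "nbhd_edges (Suc j) < nbhd_edges j"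
proof -
  have "3 * m1 \<le> m1 * m1"
    using m1_ge Q_pos mult_le_mono1[of 3 m1 m1] by simp
  then show ?thesis
    using assms m1_ge Q_pos
    by (simp add: nbhd_edges_def deg_def low_blocks_def high_blocks_step pad_blocks_step
        m1_def algebra_simps)
qed

lemma flip_graph_exists: "\<exists>(V :: nat set) E. flip_graph k deg V E"
proof (rule exists_flip_graph)
  fix j assume "j \<in> {1..<k}"
  then consider "1 \<le> j" "j < Q" | "j = Q" | "Q < j" "j < k"
    by fastforce
  then show "nbhd_edges (Suc j) < nbhd_edges j"
    by cases (auto intro: nbhd_edges_low nbhd_edges_drop nbhd_edges_high)
qed (use Q_pos Q_less_k m1_ge m2_pos m3_pos deg_increasing deg_low in auto)

end

theorem theorem4p5:
  fixes k q :: nat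
  assumes "k > 3"
    and "q = 1 \<or> 4 * q < k"
  shows "\<exists>a :: nat \<Rightarrow> nat. \<forall>N :: nat. \<exists>b :: nat \<Rightarrow> nat.
           (\<forall>i\<in>{1..q}. b i = a i) \<and> b k > N \<and>
           (\<exists>(V :: nat set) E. flip_graph k b V E)"
proof -
  define Q where "Q = max q 1"
  have Q: "1 \<le> Q" "4 * Q \<le> k" "q \<le> Q"
    using assms by (auto simp: Q_def)
  show ?thesis
  proof (rule exI[of _ "\<lambda>i. 3 * Q + 1 + i"], rule allI)
    fix N :: nat
    define s where "s = N + 2 * (partial_sum (low_blocks Q) k + 1) * k + 5"
    interpret flip_parameters Q k s
      using Q by unfold_locales (simp_all add: s_def)
    have "\<forall>i\<in>{1..q}. deg i = 3 * Q + 1 + i"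
      using Q by (simp add: deg_low)
    moreover have "N < deg k"
      using deg_last_gt by (simp add: s_def)
    ultimately show "\<exists>b. (\<forall>i\<in>{1..q}. b i = 3 * Q + 1 + i) \<and> N < b k \<and>
                        (\<exists>(V :: nat set) E. flip_graph k b V E)"
      using flip_graph_exists by (intro exI[of _ deg] conjI)
  qed
qed

end
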